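(* Let $a>0$, $\epsilon>0$ with $a\epsilon$ small (in particular $a\epsilon<1$). For $x_0^+$, $x_0^-$ let $v_\pm(x,x_0^\pm)$ denote the solution of $$\epsilon\dot v=-a\epsilon v-\sin(\pi\omega_\pm x),\qquad \omega_+=\tfrac32,\ \omega_-=\tfrac12,$$ with $v_\pm(x_0^\pm,x_0^\pm)=\pm1$, and let $\bar P^a_{\epsilon,\pm}(x_0^\pm)$ be the next $x>x_0^\pm$ at which $v_\pm(x,x_0^\pm)=\pm1$. Define, for $n\in\mathbb{N}$, $$x^\pm_{\epsilon,n}=x^\pm_n\pm(-1)^{n+1}\frac{1}{\pi\omega_\pm}\arcsin(a\epsilon),\qquad x_n^+=\tfrac{2n}{3},\ x_n^-=2n.$$ Then for all $n\in\mathbb{N}$, $$\bar P^a_{\epsilon,+}(x^+_{\epsilon,2n+1})\in\left(x^+_{\epsilon,2n+2},x^+_{\epsilon,2n+3}\right),\qquad \bar P^a_{\epsilon,-}(x^-_{\epsilon,2n})\in\left(x^-_{\epsilon,2n+1},x^-_{\epsilon,2n+2}\right).$$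
   Context: The points $x^\pm_{\epsilon,n}$ are the tangency (fold) points of the vector fields $\epsilon\dot v=-a\epsilon v-\sin(\pi\omega_\pm x)$ with the lines $v=\pm1$, i.e. solutions of $-a\epsilon(\pm1)-\sin(\pi\omega_\pm x)=0$ near $x_n^\pm$. These are the dynamics of the regularized system $\epsilon\dot v=-a\epsilon v-\sin(\pi x[1+\frac12\psi(v)])$ in the regions $v\ge1$ and $v\le-1$, where $\psi(v)=\pm1$. *)

theory Defs
  imports "HOL-Analysis.Analysis"
begin

definition omega_plus :: real where "omega_plus = 3/2"
definition omega_minus :: real where "omega_minus = 1/2"

definition xn_plus :: "nat \<Rightarrow> real" where "xn_plus n = 2 * real n / 3"
definition xn_minus :: "nat \<Rightarrow> real" where "xn_minus n = 2 * real n"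

definition xeps_plus :: "real \<Rightarrow> real \<Rightarrow> nat \<Rightarrow> real" where
  "xeps_plus a eps n = xn_plus n + (-1) ^ (n + 1) * arcsin (a * eps) / (pi * omega_plus)"
definition xeps_minus :: "real \<Rightarrow> real \<Rightarrow> nat \<Rightarrow> real" where
  "xeps_minus a eps n = xn_minus n - (-1) ^ (n + 1) * arcsin (a * eps) / (pi * omega_minus)"

definition is_sol :: "real \<Rightarrow> real \<Rightarrow> real \<Rightarrow> (real \<Rightarrow> real) \<Rightarrow> bool" where
  "is_sol a eps w v \<longleftrightarrow>
     (\<forall>x. (v has_real_derivative ((- a * eps * v x - sin (pi * w * x)) / eps)) (at x))"

definition next_hit :: "(real \<Rightarrow> real) \<Rightarrow> real \<Rightarrow> real \<Rightarrow> real \<Rightarrow> bool" where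
  "next_hit v s x0 x \<longleftrightarrow> x0 < x \<and> v x = s \<and> (\<forall>y. x0 < y \<and> y < x \<longrightarrow> v y \<noteq> s)"

end

theory Submission
  imports Defs
begin

text \<open>
  Write \<open>a\<epsilon> = sin \<alpha>\<close> and let \<open>\<sigma> = \<plusminus>1\<close> be the side of the switching line. The
  substitution \<open>u = \<sigma> v - 1\<close> turns both equations into
  \<open>u' = -a u + (sin (c (x - h)) - sin \<alpha>) / \<epsilon>\<close>, where the phase \<open>c (x - h)\<close> equals \<open>\<alpha>\<close>,
  \<open>\<pi> - \<alpha>\<close>, \<open>2\<pi> + \<alpha>\<close> at three consecutive fold points. With the integrating factor,
  \<open>H = \<epsilon> e\<^sup>a\<^sup>x u\<close> has \<open>H' = e\<^sup>a\<^sup>x (sin (c (x - h)) - sin \<alpha>)\<close>, so starting from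
  \<open>H = 0\<close> at the first fold point it increases up to the second and decreases up to the
  third. An explicit antiderivative shows that \<open>H\<close> is negative at the third fold point,
  hence the first return to the switching line lies strictly between the second and third.
\<close>

lemma first_zero_after_rise_fall:
  fixes H :: "real \<Rightarrow> real"
  assumes "x0 < x1" "x1 < x2" and cont: "continuous_on {x0..x2} H" and "H x0 = 0" "H x2 < 0"
    and rise: "\<And>x. x0 < x \<Longrightarrow> x < x1 \<Longrightarrow> \<exists>d. DERIV H x :> d \<and> d > 0"
    and fall: "\<And>x. x1 < x \<Longrightarrow> x < x2 \<Longrightarrow> \<exists>d. DERIV H x :> d \<and> d < 0"
  shows "\<exists>x. x1 < x \<and> x < x2 \<and> H x = 0 \<and> (\<forall>y. x0 < y \<and> y < x \<longrightarrow> H y \<noteq> 0)"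
proof -
  have cont_sub: "continuous_on {s..t} H" if "x0 \<le> s" "t \<le> x2" for s t
    using continuous_on_subset[OF cont] that by auto
  have pos: "H y > 0" if "x0 < y" "y \<le> x1" for y
  proof -
    have "H x0 < H y"
      by (rule DERIV_pos_imp_increasing_open[OF \<open>x0 < y\<close> rise cont_sub]) (use that assms in auto)
    with \<open>H x0 = 0\<close> show ?thesis by simp
  qed
  have falls: "H z < H y" if "x1 \<le> y" "y < z" "z \<le> x2" for y z
    by (rule DERIV_neg_imp_decreasing_open[OF \<open>y < z\<close> fall cont_sub]) (use that assms in auto)
  obtain x where x: "x1 \<le> x" "x \<le> x2" "H x = 0"
    using IVT2'[of H x2 0 x1, OF _ _ _ cont_sub] pos[of x1] assms by auto
  moreover have "x \<noteq> x1" "x \<noteq> x2" using x pos[of x1] assms by auto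
  moreover have "H y \<noteq> 0" if "x0 < y" "y < x" for y
    using pos[of y] falls[of y x] that x by (cases "y \<le> x1") auto
  ultimately show ?thesis by (intro exI[of _ x]) auto
qed

lemma sin_gt_sin_between:
  fixes \<alpha> \<phi> :: real
  assumes "0 < \<alpha>" "\<alpha> < pi/2" "\<alpha> < \<phi>" "\<phi> < pi - \<alpha>"
  shows "sin \<alpha> < sin \<phi>"
proof -
  have "sin ((\<phi> - \<alpha>)/2) > 0" by (rule sin_gt_zero) (use assms in auto)
  moreover have "cos ((\<phi> + \<alpha>)/2) > 0" by (rule cos_gt_zero_pi) (use assms in auto)
  ultimately show ?thesis using sin_diff_sin[of \<phi> \<alpha>] by (simp add: algebra_simps)
qed

lemma sin_lt_sin_between:
  fixes \<alpha> \<phi> :: real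
  assumes "0 < \<alpha>" "\<alpha> < pi/2" "pi - \<alpha> < \<phi>" "\<phi> < 2*pi + \<alpha>"
  shows "sin \<phi> < sin \<alpha>"
proof -
  have "sin ((\<phi> - \<alpha>)/2) > 0" by (rule sin_gt_zero) (use assms in auto)
  moreover have "cos ((\<phi> + \<alpha>)/2 - pi) > 0"
    by (rule cos_gt_zero_pi) (use assms in \<open>auto simp: field_simps\<close>)
  ultimately have "sin \<phi> - sin \<alpha> < 0"
    unfolding sin_diff_sin by (intro mult_pos_neg) auto
  then show ?thesis by simp
qed

lemma exp_sin_primitive:
  fixes a c h p q s :: real
  assumes "a \<noteq> 0" "a*p + c*q = 1" "c*p = a*q"
  shows "((\<lambda>x. exp (a*x) * (p * sin (c*(x-h)) - q * cos (c*(x-h)) - s/a))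
           has_real_derivative exp (a*x) * (sin (c*(x-h)) - s)) (at x)"
proof -
  have "((\<lambda>x. exp (a*x) * (p * sin (c*(x-h)) - q * cos (c*(x-h)) - s/a)) has_real_derivative
          exp (a*x) * ((a*p + c*q) * sin (c*(x-h)) + (c*p - a*q) * cos (c*(x-h)) - s)) (at x)"
    using \<open>a \<noteq> 0\<close> by (auto intro!: derivative_eq_intros simp: algebra_simps)
  with assms(2,3) show ?thesis by simp
qed

lemma exp_sin_antiderivative_period_decrease:
  fixes a c h \<alpha> :: real and H :: "real \<Rightarrow> real"
  assumes "a > 0" "c > 0" "0 < \<alpha>" "\<alpha> < pi/2"
    and dH: "\<And>x. (H has_real_derivative exp (a*x) * (sin (c*(x-h)) - sin \<alpha>)) (at x)"
  shows "H (h + (2*pi + \<alpha>)/c) < H (h + \<alpha>/c)"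
proof -
  define p where "p = a/(a\<^sup>2 + c\<^sup>2)"
  define q where "q = c/(a\<^sup>2 + c\<^sup>2)"
  define F where "F x = exp (a*x) * (p * sin (c*(x-h)) - q * cos (c*(x-h)) - sin \<alpha>/a)" for x
  define x0 where "x0 = h + \<alpha>/c"
  define x2 where "x2 = h + (2*pi + \<alpha>)/c"
  have D: "a\<^sup>2 + c\<^sup>2 > 0" using \<open>a > 0\<close> by (simp add: add_pos_nonneg)
  have "a*p + c*q = 1" using D \<open>a > 0\<close> by (simp add: p_def q_def power2_eq_square add_divide_distrib[symmetric])
  moreover have "c*p = a*q" by (simp add: p_def q_def)
  ultimately have dF: "(F has_real_derivative exp (a*x) * (sin (c*(x-h)) - sin \<alpha>)) (at x)" for x
    unfolding F_def using exp_sin_primitive \<open>a > 0\<close> by simp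
  define B where "B = p * sin \<alpha> - q * cos \<alpha> - sin \<alpha>/a"
  have "((\<lambda>x. H x - F x) has_real_derivative 0) (at x)" for x
    using DERIV_diff[OF dH dF] by simp
  then have "H x2 - F x2 = H x0 - F x0"
    by (rule DERIV_isconst_all[rule_format])
  moreover have "c*(x0-h) = \<alpha>" "c*(x2-h) = \<alpha> + 2*pi"
    using \<open>c > 0\<close> by (simp_all add: x0_def x2_def)
  then have "F x0 = exp (a*x0) * B" "F x2 = exp (a*x2) * B"
    by (simp_all add: F_def B_def)
  ultimately have "H x2 - H x0 = (exp (a*x2) - exp (a*x0)) * B"
    by (simp add: left_diff_distrib)
  also have "\<dots> < 0"
  proof (rule mult_pos_neg)
    show "exp (a*x2) - exp (a*x0) > 0"
      using \<open>a > 0\<close> \<open>c > 0\<close> \<open>\<alpha> > 0\<close> by (simp add: x0_def x2_def divide_strict_right_mono)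
    have "sin \<alpha> > 0" "cos \<alpha> > 0" "q > 0"
      using assms D by (simp_all add: sin_gt_zero cos_gt_zero q_def)
    have "p < 1/a" using \<open>a > 0\<close> \<open>c > 0\<close> D by (simp add: p_def divide_simps power2_eq_square)
    then have "p * sin \<alpha> < sin \<alpha>/a"
      using mult_strict_right_mono[OF _ \<open>sin \<alpha> > 0\<close>] by fastforce
    moreover have "q * cos \<alpha> > 0" using \<open>q > 0\<close> \<open>cos \<alpha> > 0\<close> by simp
    ultimately show "B < 0" by (simp add: B_def)
  qed
  finally show ?thesis by (simp add: x0_def x2_def)
qed

lemma damped_forced_next_zero:
  fixes a e c h \<alpha> :: real and u :: "real \<Rightarrow> real"
  assumes "a > 0" "e > 0" "c > 0" "0 < \<alpha>" "\<alpha> < pi/2"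
    and du: "\<And>x. (u has_real_derivative - a * u x + (sin (c*(x-h)) - sin \<alpha>)/e) (at x)"
    and start: "u (h + \<alpha>/c) = 0"
  shows "\<exists>x. h + (pi - \<alpha>)/c < x \<and> x < h + (2*pi + \<alpha>)/c \<and> u x = 0 \<and>
             (\<forall>y. h + \<alpha>/c < y \<and> y < x \<longrightarrow> u y \<noteq> 0)"
proof -
  define H where "H x = e * exp (a*x) * u x" for x
  have dH: "(H has_real_derivative exp (a*x) * (sin (c*(x-h)) - sin \<alpha>)) (at x)" for x
    unfolding H_def using \<open>e > 0\<close>
    by (auto intro!: derivative_eq_intros du simp: field_simps)
  have H_zero_iff: "H x = 0 \<longleftrightarrow> u x = 0" for x
    using \<open>e > 0\<close> by (simp add: H_def)
  have left_iff: "h + t/c < x \<longleftrightarrow> t < c*(x-h)" and right_iff: "x < h + t/c \<longleftrightarrow> c*(x-h) < t" for t x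
    using \<open>c > 0\<close> by (simp_all add: field_simps)
  have "\<exists>x. h + (pi - \<alpha>)/c < x \<and> x < h + (2*pi + \<alpha>)/c \<and> H x = 0 \<and>
             (\<forall>y. h + \<alpha>/c < y \<and> y < x \<longrightarrow> H y \<noteq> 0)"
  proof (rule first_zero_after_rise_fall)
    show "h + \<alpha>/c < h + (pi - \<alpha>)/c" "h + (pi - \<alpha>)/c < h + (2*pi + \<alpha>)/c"
      using assms by (simp_all add: divide_strict_right_mono)
    show "continuous_on {h + \<alpha>/c..h + (2*pi + \<alpha>)/c} H"
      using dH by (meson DERIV_continuous continuous_at_imp_continuous_on)
    show "H (h + \<alpha>/c) = 0" using start H_zero_iff by simp
    show "H (h + (2*pi + \<alpha>)/c) < 0"
      using exp_sin_antiderivative_period_decrease[OF \<open>a > 0\<close> \<open>c > 0\<close> \<open>0 < \<alpha>\<close> \<open>\<alpha> < pi/2\<close> dH]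
        \<open>H (h + \<alpha>/c) = 0\<close> by simp
  next
    fix x assume "h + \<alpha>/c < x" "x < h + (pi - \<alpha>)/c"
    then have "sin \<alpha> < sin (c*(x-h))"
      using sin_gt_sin_between assms by (simp add: left_iff right_iff)
    then show "\<exists>d. DERIV H x :> d \<and> d > 0" using dH by (intro exI conjI) auto
  next
    fix x assume "h + (pi - \<alpha>)/c < x" "x < h + (2*pi + \<alpha>)/c"
    then have "sin (c*(x-h)) < sin \<alpha>"
      using sin_lt_sin_between assms by (simp add: left_iff right_iff)
    then show "\<exists>d. DERIV H x :> d \<and> d < 0" using dH by (intro exI conjI) (auto simp: mult_pos_neg)
  qed
  then show ?thesis by (simp add: H_zero_iff)
qed

lemma next_hit_between_folds:
  fixes a eps w h \<sigma> :: real and v :: "real \<Rightarrow> real"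
  assumes "a > 0" "eps > 0" "a * eps < 1" "w > 0" "\<sigma> = 1 \<or> \<sigma> = -1"
    and sol: "is_sol a eps w v"
    and phase: "\<And>x. \<sigma> * sin (pi*w*x) = - sin (pi*w*(x-h))"
    and start: "v (h + arcsin (a*eps)/(pi*w)) = \<sigma>"
  shows "\<exists>x. next_hit v \<sigma> (h + arcsin (a*eps)/(pi*w)) x \<and>
             x \<in> {h + (pi - arcsin (a*eps))/(pi*w) <..< h + (2*pi + arcsin (a*eps))/(pi*w)}"
proof -
  define \<alpha> where "\<alpha> = arcsin (a*eps)"
  define u where "u x = \<sigma> * v x - 1" for x
  have "0 < a*eps" using assms by simp
  then have "0 < \<alpha>" "\<alpha> < pi/2" "sin \<alpha> = a*eps"
    using \<open>a * eps < 1\<close> arcsin_less_mono[of 0 "a*eps"] arcsin_lt_bounded[of "a*eps"]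
    by (simp_all add: \<alpha>_def)
  have \<sigma>\<sigma>: "\<sigma> * \<sigma> = 1" using assms by auto
  have du: "(u has_real_derivative - a * u x + (sin (pi*w*(x-h)) - sin \<alpha>)/eps) (at x)" for x
  proof -
    have "(u has_real_derivative \<sigma> * ((- a * eps * v x - sin (pi*w*x)) / eps)) (at x)"
      using sol unfolding is_sol_def u_def by (auto intro!: derivative_eq_intros)
    also have "\<sigma> * ((- a * eps * v x - sin (pi*w*x)) / eps) = - a * u x + (sin (pi*w*(x-h)) - sin \<alpha>)/eps"
      using phase[of x] \<sigma>\<sigma> \<open>sin \<alpha> = a*eps\<close> \<open>eps > 0\<close> by (simp add: u_def field_simps)
    finally show ?thesis .
  qed
  have u_zero_iff: "u x = 0 \<longleftrightarrow> v x = \<sigma>" for x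
    using \<sigma>\<sigma> assms(5) by (auto simp: u_def)
  obtain x where "h + (pi - \<alpha>)/(pi*w) < x" "x < h + (2*pi + \<alpha>)/(pi*w)" "u x = 0"
      "\<forall>y. h + \<alpha>/(pi*w) < y \<and> y < x \<longrightarrow> u y \<noteq> 0"
    using damped_forced_next_zero[OF \<open>a > 0\<close> \<open>eps > 0\<close> _ \<open>0 < \<alpha>\<close> \<open>\<alpha> < pi/2\<close> du] start \<open>w > 0\<close>
    by (auto simp: u_zero_iff \<alpha>_def)
  moreover have "h + \<alpha>/(pi*w) < h + (pi - \<alpha>)/(pi*w)"
    using \<open>\<alpha> < pi/2\<close> \<open>w > 0\<close> by (simp add: divide_strict_right_mono)
  ultimately show ?thesis
    unfolding next_hit_def by (intro exI[of _ x]) (auto simp: u_zero_iff \<alpha>_def)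
qed

lemma sin_add_multiple_pi: "sin (y + real m * pi) = (-1)^m * sin y"
  by (simp add: sin_add)

lemma plus_next_hit_between:
  fixes a eps :: real and n :: nat and v :: "real \<Rightarrow> real"
  assumes "a > 0" "eps > 0" "a * eps < 1" "is_sol a eps omega_plus v"
    and "v (xeps_plus a eps (2*n+1)) = 1"
  shows "\<exists>x. next_hit v 1 (xeps_plus a eps (2*n+1)) x \<and>
             x \<in> {xeps_plus a eps (2*n+2)<..<xeps_plus a eps (2*n+3)}"
proof -
  define h where "h = xn_plus (2*n+1)"
  have phase: "1 * sin (pi * omega_plus * x) = - sin (pi * omega_plus * (x-h))" for x
  proof -
    have "pi * omega_plus * x = pi * omega_plus * (x-h) + real (2*n+1) * pi"
      by (simp add: h_def xn_plus_def omega_plus_def algebra_simps)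
    then show ?thesis by (simp only: sin_add_multiple_pi) simp
  qed
  have "xeps_plus a eps (2*n+1) = h + arcsin (a*eps)/(pi * omega_plus)"
    "xeps_plus a eps (2*n+2) = h + (pi - arcsin (a*eps))/(pi * omega_plus)"
    "xeps_plus a eps (2*n+3) = h + (2*pi + arcsin (a*eps))/(pi * omega_plus)"
    by (simp_all add: xeps_plus_def xn_plus_def h_def omega_plus_def field_simps)
  moreover have "omega_plus > 0" by (simp add: omega_plus_def)
  ultimately show ?thesis
    using next_hit_between_folds[OF assms(1-3) _ _ assms(4) phase] assms(5) by simp
qed

lemma minus_next_hit_between:
  fixes a eps :: real and n :: nat and v :: "real \<Rightarrow> real"
  assumes "a > 0" "eps > 0" "a * eps < 1" "is_sol a eps omega_minus v"
    and "v (xeps_minus a eps (2*n)) = -1"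
  shows "\<exists>x. next_hit v (-1) (xeps_minus a eps (2*n)) x \<and>
             x \<in> {xeps_minus a eps (2*n+1)<..<xeps_minus a eps (2*n+2)}"
proof -
  define h where "h = xn_minus (2*n)"
  have phase: "-1 * sin (pi * omega_minus * x) = - sin (pi * omega_minus * (x-h))" for x
  proof -
    have "pi * omega_minus * x = pi * omega_minus * (x-h) + real (2*n) * pi"
      by (simp add: h_def xn_minus_def omega_minus_def algebra_simps)
    then show ?thesis by (simp only: sin_add_multiple_pi) simp
  qed
  have "xeps_minus a eps (2*n) = h + arcsin (a*eps)/(pi * omega_minus)"
    "xeps_minus a eps (2*n+1) = h + (pi - arcsin (a*eps))/(pi * omega_minus)"
    "xeps_minus a eps (2*n+2) = h + (2*pi + arcsin (a*eps))/(pi * omega_minus)"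
    by (simp_all add: xeps_minus_def xn_minus_def h_def omega_minus_def field_simps)
  moreover have "omega_minus > 0" by (simp add: omega_minus_def)
  ultimately show ?thesis
    using next_hit_between_folds[OF assms(1-3) _ _ assms(4) phase] assms(5) by simp
qed

theorem lemma8:
  shows "\<exists>\<delta>>0. \<delta> \<le> 1 \<and>
    (\<forall>a eps. a > 0 \<longrightarrow> eps > 0 \<longrightarrow> a * eps < \<delta> \<longrightarrow>
      (\<forall>n::nat.
        (\<forall>v. is_sol a eps omega_plus v \<longrightarrow> v (xeps_plus a eps (2*n+1)) = 1 \<longrightarrow>
           (\<exists>x. next_hit v 1 (xeps_plus a eps (2*n+1)) x \<and>
                x \<in> {xeps_plus a eps (2*n+2)<..<xeps_plus a eps (2*n+3)})) \<and>
        (\<forall>v. is_sol a eps omega_minus v \<longrightarrow> v (xeps_minus a eps (2*n)) = -1 \<longrightarrow>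
           (\<exists>x. next_hit v (-1) (xeps_minus a eps (2*n)) x \<and>
                x \<in> {xeps_minus a eps (2*n+1)<..<xeps_minus a eps (2*n+2)}))))"
proof (rule exI[of _ 1], intro conjI allI impI)
  fix a eps :: real and n :: nat and v :: "real \<Rightarrow> real"
  assume "a > 0" "eps > 0" "a * eps < 1"
  show "\<exists>x. next_hit v 1 (xeps_plus a eps (2*n+1)) x \<and>
             x \<in> {xeps_plus a eps (2*n+2)<..<xeps_plus a eps (2*n+3)}"
    if "is_sol a eps omega_plus v" "v (xeps_plus a eps (2*n+1)) = 1"
    using plus_next_hit_between \<open>a > 0\<close> \<open>eps > 0\<close> \<open>a * eps < 1\<close> that by blast
  show "\<exists>x. next_hit v (-1) (xeps_minus a eps (2*n)) x \<and>
             x \<in> {xeps_minus a eps (2*n+1)<..<xeps_minus a eps (2*n+2)}"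
    if "is_sol a eps omega_minus v" "v (xeps_minus a eps (2*n)) = -1"
    using minus_next_hit_between \<open>a > 0\<close> \<open>eps > 0\<close> \<open>a * eps < 1\<close> that by blast
qed simp_all

end
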